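(* Let $k\ge 0$ be an integer. Let $G_k$ be the tree with vertex set $\{r,s\}\cup\bigcup_{i=1}^k\{y^{(i)},x^{(i)},w^{(i)},v^{(i)},u^{(i)}\}$ and edge set $\{rs\}\cup\bigcup_{i=1}^k\{sy^{(i)},\,y^{(i)}x^{(i)},\,x^{(i)}w^{(i)},\,w^{(i)}v^{(i)},\,v^{(i)}u^{(i)}\}$ (so $s$ carries a pendant vertex $r$ and $k$ pendant paths on $5$ vertices). Let $H_k$ be obtained from $G_k$ by adding three new vertices $u,v,w$ and edges $uv,vw,ws$. Then $\gamma(G_k)=2k+1$ and $\Gamma(G_k)=5^k+3^k$, while $\gamma(H_k)=2k+2$ and $\Gamma(H_k)=2\cdot 5^k+3^k$.
   Context: For a graph $G$, a set $D\subseteq V(G)$ is dominating if every vertex of $G$ lies in $D$ or has a neighbour in $D$. The domination number $\gamma(G)$ is the minimum size of a dominating set; $\Gamma(G)$ denotes the number of dominating sets of $G$ of size $\gamma(G)$. *)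

theory Defs
  imports Main
begin

definition adj :: "('a \<times> 'a) set \<Rightarrow> 'a \<Rightarrow> 'a \<Rightarrow> bool" where
  "adj Es x y \<longleftrightarrow> (x, y) \<in> Es \<or> (y, x) \<in> Es"

definition dominating :: "'a set \<Rightarrow> ('a \<times> 'a) set \<Rightarrow> 'a set \<Rightarrow> bool" where
  "dominating V Es D \<longleftrightarrow> D \<subseteq> V \<and> (\<forall>x\<in>V. x \<in> D \<or> (\<exists>y\<in>D. adj Es x y))"

definition domination_number :: "'a set \<Rightarrow> ('a \<times> 'a) set \<Rightarrow> nat" where
  "domination_number V Es = (LEAST n. \<exists>D. dominating V Es D \<and> card D = n)"

definition num_min_dom_sets :: "'a set \<Rightarrow> ('a \<times> 'a) set \<Rightarrow> nat" where
  "num_min_dom_sets V Es =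
     card {D. dominating V Es D \<and> card D = domination_number V Es}"

datatype vtx = R | S | Y nat | X nat | W nat | V nat | U nat | Uh | Vh | Wh

definition G_verts :: "nat \<Rightarrow> vtx set" where
  "G_verts k = {R, S} \<union> (\<Union>i\<in>{1..k}. {Y i, X i, W i, V i, U i})"

definition G_edges :: "nat \<Rightarrow> (vtx \<times> vtx) set" where
  "G_edges k = {(R, S)} \<union>
     (\<Union>i\<in>{1..k}. {(S, Y i), (Y i, X i), (X i, W i), (W i, V i), (V i, U i)})"

definition H_verts :: "nat \<Rightarrow> vtx set" where
  "H_verts k = G_verts k \<union> {Uh, Vh, Wh}"

definition H_edges :: "nat \<Rightarrow> (vtx \<times> vtx) set" where
  "H_edges k = G_edges k \<union> {(Uh, Vh), (Vh, Wh), (Wh, S)}"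

end

theory Submission
  imports Defs "HOL-Library.FuncSet" "HOL-Library.Disjoint_Sets"
begin

text \<open>A dominating set splits into its part in the hub \<open>{r, s, u, v, w}\<close> and its parts in the
  \<open>k\<close> pendant paths \<open>y x w v u\<close>. Each path needs two vertices of the set, one of \<open>u, v\<close> and
  one of \<open>w, x, y\<close>; there are exactly 5 admissible pairs when \<open>s\<close> is in the set and 3 when it
  is not, since then \<open>y\<close> must be dominated from inside its path. The hub needs one vertex in
  \<open>G\<^sub>k\<close> (\<open>{s}\<close> or \<open>{r}\<close>) and two in \<open>H\<^sub>k\<close> (\<open>{s, u}\<close>, \<open>{s, v}\<close> or \<open>{r, v}\<close>). The choices
  in different parts are independent once the hub part is fixed, so \<open>\<gamma> = m + 2k\<close> and
  \<open>\<Gamma>\<close> is the sum of \<open>5\<^sup>k\<close> or \<open>3\<^sup>k\<close> over the minimum hub parts.\<close>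

lemma two_le_card_if_distinct:
  "finite C \<Longrightarrow> a \<in> C \<Longrightarrow> b \<in> C \<Longrightarrow> a \<noteq> b \<Longrightarrow> 2 \<le> card C"
  by (metis card_2_iff card_mono empty_subsetI insert_subset)

lemma eq_doubleton_if_card_eq_2:
  assumes "card C = 2" "a \<in> C" "b \<in> C" "a \<noteq> b"
  shows "C = {a, b}"
proof (rule card_subset_eq[symmetric])
  show "finite C" using assms(1) by (simp add: card_ge_0_finite)
qed (use assms in auto)

lemma card_block_decomposition:
  assumes "finite C" "\<And>i. i \<in> I \<Longrightarrow> finite (B i)" "finite I" "disjoint_family_on B I"
    and "C \<inter> (\<Union>i\<in>I. B i) = {}" "D \<subseteq> C \<union> (\<Union>i\<in>I. B i)"
  shows "card D = card (D \<inter> C) + (\<Sum>i\<in>I. card (D \<inter> B i))"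
proof -
  have "D = (D \<inter> C) \<union> (\<Union>i\<in>I. D \<inter> B i)" using assms(6) by blast
  moreover have "card (\<Union>i\<in>I. D \<inter> B i) = (\<Sum>i\<in>I. card (D \<inter> B i))"
    using assms(2-4) by (intro card_UN_disjoint) (auto simp: disjoint_family_on_def)
  moreover have "(D \<inter> C) \<inter> (\<Union>i\<in>I. D \<inter> B i) = {}" using assms(5) by blast
  ultimately show ?thesis
    using assms(1-3) by (metis card_Un_disjoint finite_Int finite_UN)
qed

lemma card_block_assembled_sets:
  assumes "finite C" "\<And>i. i \<in> I \<Longrightarrow> finite (B i)" "finite I" "disjoint_family_on B I"
    and "C \<inter> (\<Union>i\<in>I. B i) = {}" "K \<subseteq> Pow C"
    and "\<And>c i. c \<in> K \<Longrightarrow> i \<in> I \<Longrightarrow> Q c i \<subseteq> Pow (B i)"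
  shows "card {D. D \<subseteq> C \<union> (\<Union>i\<in>I. B i) \<and> D \<inter> C \<in> K \<and> (\<forall>i\<in>I. D \<inter> B i \<in> Q (D \<inter> C) i)}
    = (\<Sum>c\<in>K. \<Prod>i\<in>I. card (Q c i))"
proof -
  let ?F = "{D. D \<subseteq> C \<union> (\<Union>i\<in>I. B i) \<and> D \<inter> C \<in> K \<and> (\<forall>i\<in>I. D \<inter> B i \<in> Q (D \<inter> C) i)}"
  let ?split = "\<lambda>D. (D \<inter> C, restrict (\<lambda>i. D \<inter> B i) I)"
  let ?join = "\<lambda>c f. c \<union> (\<Union>i\<in>I. f i)"
  have join_C: "?join c f \<inter> C = c"
    and join_B: "\<And>i. i \<in> I \<Longrightarrow> ?join c f \<inter> B i = f i"
    and join_sub: "?join c f \<subseteq> C \<union> (\<Union>i\<in>I. B i)"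
    if cf: "c \<in> K" "f \<in> PiE I (Q c)" for c f
  proof -
    have c: "c \<subseteq> C" using cf(1) assms(6) by blast
    have f: "\<And>i. i \<in> I \<Longrightarrow> f i \<subseteq> B i" using cf assms(7) by (metis PiE_mem PowD subsetD)
    show "?join c f \<inter> C = c" using c f assms(5) by blast
    show "?join c f \<subseteq> C \<union> (\<Union>i\<in>I. B i)" using c f by blast
    fix i assume i: "i \<in> I"
    have "\<And>j. j \<in> I \<Longrightarrow> j \<noteq> i \<Longrightarrow> f j \<inter> B i = {}"
      using f i assms(4) unfolding disjoint_family_on_def by blast
    moreover have "c \<inter> B i = {}" using c i assms(5) by blast
    ultimately show "?join c f \<inter> B i = f i" using f[OF i] i by blast
  qed
  have "bij_betw ?split ?F (SIGMA c:K. PiE I (Q c))"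
  proof (rule bij_betw_byWitness[where f' = "case_prod ?join"])
    show "\<forall>D\<in>?F. case_prod ?join (?split D) = D" by auto
    show "?split ` ?F \<subseteq> (SIGMA c:K. PiE I (Q c))" by auto
    show "\<forall>cf\<in>(SIGMA c:K. PiE I (Q c)). ?split (case_prod ?join cf) = cf"
    proof (intro ballI)
      fix cf assume "cf \<in> (SIGMA c:K. PiE I (Q c))"
      then obtain c f where cf: "cf = (c, f)" "c \<in> K" "f \<in> PiE I (Q c)" by blast
      have "restrict (\<lambda>i. ?join c f \<inter> B i) I = restrict f I"
        using join_B[OF cf(2,3)] by (intro restrict_ext) simp
      then show "?split (case_prod ?join cf) = cf"
        using cf join_C[OF cf(2,3)] PiE_restrict[OF cf(3)] by simp
    qed
    show "case_prod ?join ` (SIGMA c:K. PiE I (Q c)) \<subseteq> ?F"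
    proof
      fix D assume "D \<in> case_prod ?join ` (SIGMA c:K. PiE I (Q c))"
      then obtain cf where D: "D = case_prod ?join cf" and "cf \<in> (SIGMA c:K. PiE I (Q c))"
        by (rule imageE)
      then obtain c f where "cf = (c, f)" and cf: "c \<in> K" "f \<in> PiE I (Q c)" by blast
      then have "D = ?join c f" using D by simp
      then show "D \<in> ?F" using cf join_C[OF cf] join_B[OF cf] join_sub[OF cf] by auto
    qed
  qed
  then have "card ?F = card (SIGMA c:K. PiE I (Q c))" by (rule bij_betw_same_card)
  also have "\<dots> = (\<Sum>c\<in>K. card (PiE I (Q c)))"
  proof (rule card_SigmaI)
    show "finite K" using assms(1,6) finite_subset by blast
    have "finite (Q c i)" if "c \<in> K" "i \<in> I" for c i
      using assms(2,7) that by (meson finite_Pow_iff finite_subset)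
    then show "\<forall>c\<in>K. finite (PiE I (Q c))" using assms(3) by (simp add: finite_PiE)
  qed
  finally show ?thesis using assms(3) by (simp add: card_PiE)
qed

definition hub :: "vtx set" where
  "hub = {R, S, Uh, Vh, Wh}"

definition branch :: "nat \<Rightarrow> vtx set" where
  "branch i = {Y i, X i, W i, V i, U i}"

lemma S_in_hub [simp]: "S \<in> hub"
  by (simp add: hub_def)

lemma finite_hub [simp]: "finite hub"
  by (simp add: hub_def)

lemma finite_branch [simp]: "finite (branch i)"
  by (simp add: branch_def)

lemma disjoint_family_branch: "disjoint_family_on branch I"
  by (auto simp: disjoint_family_on_def branch_def)

lemma hub_Int_branches: "hub \<inter> (\<Union>i\<in>I. branch i) = {}"
  by (auto simp: hub_def branch_def)

text \<open>The closed neighbourhood of every vertex of branch \<open>i\<close> meets \<open>D\<close>; the flag \<open>s\<close>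
  stands for \<open>S \<in> D\<close>, \<open>S\<close> being the only neighbour of the branch outside it.\<close>
definition branch_dominated :: "bool \<Rightarrow> nat \<Rightarrow> vtx set \<Rightarrow> bool" where
  "branch_dominated s i D \<longleftrightarrow>
     (U i \<in> D \<or> V i \<in> D) \<and> (U i \<in> D \<or> V i \<in> D \<or> W i \<in> D) \<and> (V i \<in> D \<or> W i \<in> D \<or> X i \<in> D)
     \<and> (W i \<in> D \<or> X i \<in> D \<or> Y i \<in> D) \<and> (X i \<in> D \<or> Y i \<in> D \<or> s)"

definition min_branch_sets :: "bool \<Rightarrow> nat \<Rightarrow> vtx set set" where
  "min_branch_sets s i = {P. P \<subseteq> branch i \<and> card P = 2 \<and> branch_dominated s i P}"

lemma branch_dominated_Int_branch:
  "branch_dominated s i (D \<inter> branch i) \<longleftrightarrow> branch_dominated s i D"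
  by (simp add: branch_dominated_def branch_def)

lemma two_le_card_branch:
  assumes "branch_dominated s i D"
  shows "2 \<le> card (D \<inter> branch i)"
proof -
  obtain a where "a \<in> {U i, V i}" "a \<in> D" using assms by (auto simp: branch_dominated_def)
  moreover obtain b where "b \<in> {W i, X i, Y i}" "b \<in> D" using assms by (auto simp: branch_dominated_def)
  ultimately show ?thesis
    by (intro two_le_card_if_distinct[of _ a b]) (auto simp: branch_def)
qed

lemma min_branch_sets_eq:
  "min_branch_sets s i = (if s then {{V i, X i}, {V i, W i}, {V i, Y i}, {U i, W i}, {U i, X i}}
                                else {{V i, X i}, {V i, Y i}, {U i, X i}})"
  (is "_ = ?pairs")
proof (intro equalityI subsetI)
  fix P assume P: "P \<in> min_branch_sets s i"
  then have dom: "branch_dominated s i P" and card: "card P = 2"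
    by (simp_all add: min_branch_sets_def)
  obtain a where a: "a \<in> {U i, V i}" "a \<in> P" using dom by (auto simp: branch_dominated_def)
  obtain b where b: "b \<in> {W i, X i, Y i}" "b \<in> P" using dom by (auto simp: branch_dominated_def)
  have "P = {a, b}" using a b card by (intro eq_doubleton_if_card_eq_2) auto
  then show "P \<in> ?pairs" using a(1) b(1) dom by (auto simp: branch_dominated_def)
next
  fix P assume "P \<in> ?pairs"
  then show "P \<in> min_branch_sets s i"
    by (cases s) (auto simp: min_branch_sets_def branch_def branch_dominated_def)
qed

lemma Int_branch_in_min_branch_sets_iff:
  "D \<inter> branch i \<in> min_branch_sets s i \<longleftrightarrow> branch_dominated s i D \<and> card (D \<inter> branch i) = 2"
  by (auto simp: min_branch_sets_def branch_dominated_Int_branch)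

lemma card_min_branch_sets: "card (min_branch_sets s i) = (if s then 5 else 3)"
  by (simp add: min_branch_sets_eq doubleton_eq_iff)

text \<open>The common shape of \<open>G\<^sub>k\<close> and \<open>H\<^sub>k\<close>: the hub and the branches are dominated
  independently, coupled only through the flag \<open>S \<in> D\<close>.\<close>
locale branched_graph =
  fixes Vs :: "vtx set" and Es :: "(vtx \<times> vtx) set" and k m :: nat
    and hub_dominated :: "vtx set \<Rightarrow> bool"
  assumes dominating_iff: "dominating Vs Es D \<longleftrightarrow> D \<subseteq> hub \<union> (\<Union>i\<in>{1..k}. branch i)
      \<and> hub_dominated (D \<inter> hub) \<and> (\<forall>i\<in>{1..k}. branch_dominated (S \<in> D) i D)"
    and card_hub_part_ge: "c \<subseteq> hub \<Longrightarrow> hub_dominated c \<Longrightarrow> m \<le> card c"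
    and hub_part_exists: "\<exists>c. c \<subseteq> hub \<and> hub_dominated c \<and> card c = m"
begin

lemma card_split:
  "D \<subseteq> hub \<union> (\<Union>i\<in>{1..k}. branch i) \<Longrightarrow>
     card D = card (D \<inter> hub) + (\<Sum>i\<in>{1..k}. card (D \<inter> branch i))"
  by (rule card_block_decomposition) (simp_all add: disjoint_family_branch hub_Int_branches)

lemma card_dominating_ge:
  assumes "dominating Vs Es D"
  shows "m + 2 * k \<le> card D"
proof -
  have D: "D \<subseteq> hub \<union> (\<Union>i\<in>{1..k}. branch i)" "hub_dominated (D \<inter> hub)"
    "\<forall>i\<in>{1..k}. branch_dominated (S \<in> D) i D"
    using assms dominating_iff by blast+
  have "m \<le> card (D \<inter> hub)" using card_hub_part_ge D(2) by blast
  moreover have "(\<Sum>i\<in>{1..k}. 2) \<le> (\<Sum>i\<in>{1..k}. card (D \<inter> branch i))"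
    using D(3) two_le_card_branch by (intro sum_mono) blast
  ultimately show ?thesis using card_split[OF D(1)] by simp
qed

lemma exists_dominating_card_eq: "\<exists>D. dominating Vs Es D \<and> card D = m + 2 * k"
proof -
  obtain c where c: "c \<subseteq> hub" "hub_dominated c" "card c = m" using hub_part_exists by blast
  define D where "D = c \<union> (\<Union>i\<in>{1..k}. {V i, X i})"
  have sub: "D \<subseteq> hub \<union> (\<Union>i\<in>{1..k}. branch i)" using c(1) by (auto simp: D_def branch_def)
  have hub_part: "D \<inter> hub = c" using c(1) by (auto simp: D_def hub_def)
  have branch_part: "D \<inter> branch i = {V i, X i}" if "i \<in> {1..k}" for i
    using c(1) that by (auto simp: D_def hub_def branch_def)
  have "branch_dominated (S \<in> D) i D" if "i \<in> {1..k}" for i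
    using branch_part[OF that] branch_dominated_Int_branch[of "S \<in> D" i D]
    by (simp add: branch_dominated_def)
  then have "dominating Vs Es D" using sub hub_part c(2) dominating_iff by simp
  moreover have "card D = m + 2 * k"
    using card_split[OF sub] hub_part branch_part c(3) by simp
  ultimately show ?thesis by blast
qed

lemma domination_number_eq: "domination_number Vs Es = m + 2 * k"
  unfolding domination_number_def
  by (rule Least_equality) (use exists_dominating_card_eq card_dominating_ge in auto)

lemma minimum_dominating_sets_eq:
  "{D. dominating Vs Es D \<and> card D = m + 2 * k} =
   {D. D \<subseteq> hub \<union> (\<Union>i\<in>{1..k}. branch i) \<and> D \<inter> hub \<in> {c. c \<subseteq> hub \<and> hub_dominated c \<and> card c = m}
       \<and> (\<forall>i\<in>{1..k}. D \<inter> branch i \<in> min_branch_sets (S \<in> D \<inter> hub) i)}"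
proof -
  have "dominating Vs Es D \<and> card D = m + 2 * k \<longleftrightarrow>
     D \<subseteq> hub \<union> (\<Union>i\<in>{1..k}. branch i) \<and> hub_dominated (D \<inter> hub) \<and> card (D \<inter> hub) = m
       \<and> (\<forall>i\<in>{1..k}. branch_dominated (S \<in> D) i D \<and> card (D \<inter> branch i) = 2)" for D
  proof
    assume D: "dominating Vs Es D \<and> card D = m + 2 * k"
    then have sub: "D \<subseteq> hub \<union> (\<Union>i\<in>{1..k}. branch i)" and hub: "hub_dominated (D \<inter> hub)"
      and br: "\<forall>i\<in>{1..k}. branch_dominated (S \<in> D) i D"
      using dominating_iff by blast+
    have hub_ge: "m \<le> card (D \<inter> hub)" using card_hub_part_ge hub by blast
    have br_ge: "\<And>i. i \<in> {1..k} \<Longrightarrow> 2 \<le> card (D \<inter> branch i)"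
      using br two_le_card_branch by blast
    then have "(\<Sum>i\<in>{1..k}. 2) \<le> (\<Sum>i\<in>{1..k}. card (D \<inter> branch i))" by (rule sum_mono)
    then have hub_eq: "card (D \<inter> hub) = m"
      and sum_eq: "(\<Sum>i\<in>{1..k}. 2) = (\<Sum>i\<in>{1..k}. card (D \<inter> branch i))"
      using card_split[OF sub] D hub_ge by simp_all
    have "card (D \<inter> branch i) = 2" if "i \<in> {1..k}" for i
      using sum_mono_inv[OF sum_eq br_ge that] by simp
    then show "D \<subseteq> hub \<union> (\<Union>i\<in>{1..k}. branch i) \<and> hub_dominated (D \<inter> hub) \<and> card (D \<inter> hub) = m
       \<and> (\<forall>i\<in>{1..k}. branch_dominated (S \<in> D) i D \<and> card (D \<inter> branch i) = 2)"
      using sub hub hub_eq br by blast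
  next
    assume "D \<subseteq> hub \<union> (\<Union>i\<in>{1..k}. branch i) \<and> hub_dominated (D \<inter> hub) \<and> card (D \<inter> hub) = m
       \<and> (\<forall>i\<in>{1..k}. branch_dominated (S \<in> D) i D \<and> card (D \<inter> branch i) = 2)"
    then show "dominating Vs Es D \<and> card D = m + 2 * k"
      using card_split dominating_iff by simp
  qed
  then show ?thesis
    by (intro Collect_cong) (simp add: Int_branch_in_min_branch_sets_iff)
qed

lemma num_min_dom_sets_eq:
  "num_min_dom_sets Vs Es = (\<Sum>c | c \<subseteq> hub \<and> hub_dominated c \<and> card c = m. (if S \<in> c then 5 else 3) ^ k)"
proof -
  have "num_min_dom_sets Vs Es = (\<Sum>c | c \<subseteq> hub \<and> hub_dominated c \<and> card c = m.
      \<Prod>i\<in>{1..k}. card (min_branch_sets (S \<in> c) i))"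
    unfolding num_min_dom_sets_def domination_number_eq minimum_dominating_sets_eq
    by (rule card_block_assembled_sets[where Q = "\<lambda>c. min_branch_sets (S \<in> c)"])
      (auto simp: disjoint_family_branch hub_Int_branches min_branch_sets_def)
  then show ?thesis by (simp add: card_min_branch_sets)
qed

end

lemma adj_G_edges:
  "adj (G_edges k) R y \<longleftrightarrow> y = S"
  "adj (G_edges k) S y \<longleftrightarrow> y = R \<or> (\<exists>j\<in>{1..k}. y = Y j)"
  "adj (G_edges k) (Y i) y \<longleftrightarrow> i \<in> {1..k} \<and> (y = S \<or> y = X i)"
  "adj (G_edges k) (X i) y \<longleftrightarrow> i \<in> {1..k} \<and> (y = Y i \<or> y = W i)"
  "adj (G_edges k) (W i) y \<longleftrightarrow> i \<in> {1..k} \<and> (y = X i \<or> y = V i)"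
  "adj (G_edges k) (V i) y \<longleftrightarrow> i \<in> {1..k} \<and> (y = W i \<or> y = U i)"
  "adj (G_edges k) (U i) y \<longleftrightarrow> i \<in> {1..k} \<and> y = V i"
  by (auto simp: adj_def G_edges_def)

lemma adj_H_edges:
  "adj (H_edges k) x y \<longleftrightarrow> adj (G_edges k) x y \<or> adj {(Uh, Vh), (Vh, Wh), (Wh, S)} x y"
  by (auto simp: adj_def H_edges_def)

lemma adj_H_edges_branch:
  "x \<in> branch i \<Longrightarrow> adj (H_edges k) x y \<longleftrightarrow> adj (G_edges k) x y"
  unfolding adj_H_edges by (auto simp: adj_def branch_def)

lemma branch_vertices_dominated_iff:
  assumes "i \<in> {1..k}"
  shows "(\<forall>x\<in>branch i. x \<in> D \<or> (\<exists>y\<in>D. adj (G_edges k) x y))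
    \<longleftrightarrow> branch_dominated (S \<in> D) i D"
  using assms by (simp add: branch_def adj_G_edges branch_dominated_def) blast

lemma adj_H_edges_hub:
  "adj (H_edges k) R y \<longleftrightarrow> y = S"
  "adj (H_edges k) S y \<longleftrightarrow> y = R \<or> y = Wh \<or> (\<exists>j\<in>{1..k}. y = Y j)"
  "adj (H_edges k) Uh y \<longleftrightarrow> y = Vh"
  "adj (H_edges k) Vh y \<longleftrightarrow> y = Uh \<or> y = Wh"
  "adj (H_edges k) Wh y \<longleftrightarrow> y = Vh \<or> y = S"
  unfolding adj_H_edges by (auto simp: adj_def G_edges_def)

lemma G_verts_eq: "G_verts k = {R, S} \<union> (\<Union>i\<in>{1..k}. branch i)"
  by (simp add: G_verts_def branch_def)

lemma H_verts_eq: "H_verts k = hub \<union> (\<Union>i\<in>{1..k}. branch i)"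
  by (auto simp: H_verts_def G_verts_def hub_def branch_def)

definition G_hub_dominated :: "vtx set \<Rightarrow> bool" where
  "G_hub_dominated c \<longleftrightarrow> c \<subseteq> {R, S} \<and> (R \<in> c \<or> S \<in> c)"

definition H_hub_dominated :: "vtx set \<Rightarrow> bool" where
  "H_hub_dominated c \<longleftrightarrow> (R \<in> c \<or> S \<in> c) \<and> (Uh \<in> c \<or> Vh \<in> c) \<and> (S \<in> c \<or> Vh \<in> c \<or> Wh \<in> c)"

lemma dominating_G_iff:
  "dominating (G_verts k) (G_edges k) D \<longleftrightarrow> D \<subseteq> hub \<union> (\<Union>i\<in>{1..k}. branch i)
     \<and> G_hub_dominated (D \<inter> hub) \<and> (\<forall>i\<in>{1..k}. branch_dominated (S \<in> D) i D)"
proof -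
  have hub_part: "(\<forall>x\<in>{R, S}. x \<in> D \<or> (\<exists>y\<in>D. adj (G_edges k) x y)) \<longleftrightarrow> R \<in> D \<or> S \<in> D"
    by (auto simp: adj_G_edges)
  have "dominating (G_verts k) (G_edges k) D \<longleftrightarrow> D \<subseteq> G_verts k \<and> (R \<in> D \<or> S \<in> D)
      \<and> (\<forall>i\<in>{1..k}. branch_dominated (S \<in> D) i D)"
    unfolding dominating_def G_verts_eq ball_Un ball_UN hub_part
    using branch_vertices_dominated_iff by simp
  then show ?thesis by (auto simp: G_verts_eq G_hub_dominated_def hub_def branch_def)
qed

lemma dominating_H_iff:
  "dominating (H_verts k) (H_edges k) D \<longleftrightarrow> D \<subseteq> hub \<union> (\<Union>i\<in>{1..k}. branch i)
     \<and> H_hub_dominated (D \<inter> hub) \<and> (\<forall>i\<in>{1..k}. branch_dominated (S \<in> D) i D)"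
proof -
  have hub_part: "(\<forall>x\<in>hub. x \<in> D \<or> (\<exists>y\<in>D. adj (H_edges k) x y)) \<longleftrightarrow> H_hub_dominated (D \<inter> hub)"
    by (auto simp: hub_def adj_H_edges_hub H_hub_dominated_def)
  have branch_part: "(\<forall>x\<in>branch i. x \<in> D \<or> (\<exists>y\<in>D. adj (H_edges k) x y))
      \<longleftrightarrow> branch_dominated (S \<in> D) i D" if "i \<in> {1..k}" for i
    using branch_vertices_dominated_iff[OF that] adj_H_edges_branch by simp
  show ?thesis
    unfolding dominating_def H_verts_eq ball_Un ball_UN hub_part using branch_part by simp
qed

lemma min_G_hub_parts: "{c. c \<subseteq> hub \<and> G_hub_dominated c \<and> card c = 1} = {{S}, {R}}"
  by (auto simp: G_hub_dominated_def hub_def card_1_singleton_iff)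

lemma min_H_hub_parts: "{c. c \<subseteq> hub \<and> H_hub_dominated c \<and> card c = 2} = {{S, Uh}, {S, Vh}, {R, Vh}}"
  (is "_ = ?pairs")
proof (intro equalityI subsetI)
  fix c assume "c \<in> {c. c \<subseteq> hub \<and> H_hub_dominated c \<and> card c = 2}"
  then have dom: "H_hub_dominated c" and card: "card c = 2" by simp_all
  obtain a where a: "a \<in> {R, S}" "a \<in> c" using dom by (auto simp: H_hub_dominated_def)
  obtain b where b: "b \<in> {Uh, Vh}" "b \<in> c" using dom by (auto simp: H_hub_dominated_def)
  have "c = {a, b}" using a b card by (intro eq_doubleton_if_card_eq_2) auto
  then show "c \<in> ?pairs" using a(1) b(1) dom by (auto simp: H_hub_dominated_def)
qed (auto simp: hub_def H_hub_dominated_def)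

lemma branched_graph_G: "branched_graph (G_verts k) (G_edges k) k 1 G_hub_dominated"
proof
  show "1 \<le> card c" if "c \<subseteq> hub" "G_hub_dominated c" for c
    using that by (auto simp: G_hub_dominated_def Suc_le_eq card_gt_0_iff intro: finite_subset)
  show "\<exists>c. c \<subseteq> hub \<and> G_hub_dominated c \<and> card c = 1"
    by (rule exI[of _ "{S}"]) (simp add: G_hub_dominated_def hub_def)
qed (rule dominating_G_iff)

lemma branched_graph_H: "branched_graph (H_verts k) (H_edges k) k 2 H_hub_dominated"
proof
  show "2 \<le> card c" if c: "c \<subseteq> hub" "H_hub_dominated c" for c
  proof -
    obtain a where "a \<in> {R, S}" "a \<in> c" using c(2) by (auto simp: H_hub_dominated_def)
    moreover obtain b where "b \<in> {Uh, Vh}" "b \<in> c" using c(2) by (auto simp: H_hub_dominated_def)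
    ultimately show ?thesis
      using c(1) by (intro two_le_card_if_distinct[of _ a b]) (auto intro: finite_subset)
  qed
  show "\<exists>c. c \<subseteq> hub \<and> H_hub_dominated c \<and> card c = 2"
    by (rule exI[of _ "{S, Uh}"]) (simp add: H_hub_dominated_def hub_def)
qed (rule dominating_H_iff)

theorem mainTheorem4:
  fixes k :: nat
  shows "domination_number (G_verts k) (G_edges k) = 2 * k + 1
       \<and> num_min_dom_sets (G_verts k) (G_edges k) = 5 ^ k + 3 ^ k
       \<and> domination_number (H_verts k) (H_edges k) = 2 * k + 2
       \<and> num_min_dom_sets (H_verts k) (H_edges k) = 2 * 5 ^ k + 3 ^ k"
proof -
  interpret G: branched_graph "G_verts k" "G_edges k" k 1 G_hub_dominated
    by (rule branched_graph_G)
  interpret H: branched_graph "H_verts k" "H_edges k" k 2 H_hub_dominated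
    by (rule branched_graph_H)
  show ?thesis
    unfolding G.domination_number_eq G.num_min_dom_sets_eq min_G_hub_parts
      H.domination_number_eq H.num_min_dom_sets_eq min_H_hub_parts
    by (simp add: doubleton_eq_iff)
qed

end
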